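(* For $\theta\in[0,1/2]$ let $U_\theta=\mathrm{diag}(1,e^{2\pi i\theta})$ and, for $\epsilon\ge0$, let $\mathcal{E}_\theta(\rho)=\epsilon I/2+(1-\epsilon)U_\theta\rho U_\theta^\dagger$. Then for every $m\ge1$, $\mathcal{E}_\theta^m(\rho)=\bigl(1-(1-\epsilon)^m\bigr)I/2+(1-\epsilon)^mU_{m\theta}\rho U_{m\theta}^\dagger$. Moreover, there is an estimation protocol using no entanglement and only single-qubit preparations, sequential applications of the channel and Hadamard-basis measurements, which uses the channel $N$ times and whose estimator $\hat\theta$ satisfies $\sqrt{E(\hat\theta-\theta)^2}=O(\log N/N)$ uniformly in $\theta\in[0,1/2]$, provided $N\epsilon\le1$ (in particular for the noiseless case $\epsilon=0$).
   Context: The Hadamard basis is $|\pm\rangle=(|0\rangle\pm|1\rangle)/\sqrt2$. *)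

theory Defs
  imports "HOL-Probability.Probability"
begin

text \<open>Qubit operators are 2x2 complex matrices indexed by the finite type 2,
  whose elements 0 and 1 label the computational basis states.\<close>

type_synonym qmat = "complex ^ 2 ^ 2"

definition adj :: "qmat \<Rightarrow> qmat" where
  "adj M = (\<chi> i j. cnj (M $ j $ i))"

definition density :: "qmat \<Rightarrow> bool" where
  "density \<rho> \<longleftrightarrow> adj \<rho> = \<rho> \<and> (\<Sum>i\<in>UNIV. \<rho> $ i $ i) = 1 \<and>
     (\<forall>v :: complex ^ 2. 0 \<le> Re (\<Sum>i\<in>UNIV. \<Sum>j\<in>UNIV. cnj (v $ i) * \<rho> $ i $ j * v $ j))"

definition Uph :: "real \<Rightarrow> qmat" where
  "Uph \<theta> = (\<chi> i j. if i = j then (if i = 0 then 1 else cis (2 * pi * \<theta>)) else 0)"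

definition chan :: "real \<Rightarrow> real \<Rightarrow> qmat \<Rightarrow> qmat" where
  "chan \<theta> \<epsilon> \<rho> = (\<epsilon> / 2) *\<^sub>R mat 1 + (1 - \<epsilon>) *\<^sub>R (Uph \<theta> ** \<rho> ** adj (Uph \<theta>))"

text \<open>Probability of outcome |+> when measuring state M in the Hadamard basis:
  <+|M|+> with |+> = (|0>+|1>)/sqrt 2.\<close>
definition hprob :: "qmat \<Rightarrow> real" where
  "hprob M = Re ((\<Sum>i\<in>UNIV. \<Sum>j\<in>UNIV. M $ i $ j) / 2)"

text \<open>A (possibly adaptive) protocol without entanglement: in each round, depending
  on the outcome history h (chronological list of outcomes, True = '+'), it prepares
  the single-qubit state fst (step h), applies the channel snd (step h) times in
  sequence, and measures in the Hadamard basis.\<close>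
fun run :: "(bool list \<Rightarrow> qmat \<times> nat) \<Rightarrow> real \<Rightarrow> real \<Rightarrow> nat \<Rightarrow> bool list \<Rightarrow> bool list pmf" where
  "run step \<theta> \<epsilon> 0 h = return_pmf h"
| "run step \<theta> \<epsilon> (Suc r) h =
     bind_pmf (bernoulli_pmf (hprob ((chan \<theta> \<epsilon> ^^ snd (step h)) (fst (step h)))))
              (\<lambda>b. run step \<theta> \<epsilon> r (h @ [b]))"

definition valid_protocol :: "nat \<Rightarrow> nat \<Rightarrow> (bool list \<Rightarrow> qmat \<times> nat) \<Rightarrow> bool" where
  "valid_protocol N R step \<longleftrightarrow>
     (\<forall>h. length h < R \<longrightarrow> density (fst (step h))) \<and>
     (\<forall>h. length h = R \<longrightarrow> (\<Sum>j<R. snd (step (take j h))) = N)"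

definition rmse :: "(bool list \<Rightarrow> qmat \<times> nat) \<Rightarrow> nat \<Rightarrow> (bool list \<Rightarrow> real) \<Rightarrow> real \<Rightarrow> real \<Rightarrow> real" where
  "rmse step R est \<theta> \<epsilon> =
     sqrt (measure_pmf.expectation (run step \<theta> \<epsilon> R []) (\<lambda>h. (est h - \<theta>)^2))"

end

theory Submission
  imports Defs
begin

text \<open>
  The iteration formula holds because conjugation by U_\<theta> fixes the depolarising part of the
  channel and U_a U_b = U_(a+b).

  The estimator is an adaptive bisection. Stage k keeps a centre a_k and a half-width
  w_k = (3/4)^k / 4, starting from the interval [0, 1/2]. It prepares (|0> + e^(i\<phi>) |1>) / sqrt 2,
  applies the channel m_k ~ (4/3)^k times and measures in the Hadamard basis, with \<phi> chosen
  such that + has probability (1 + d sin (2 pi m_k (\<theta> - a_k))) / 2, where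
  d = (1 - \<epsilon>)^(m_k) \<ge> 1/2 because N \<epsilon> \<le> 1. As m_k w_k lies in [1/8, 1/4], whenever
  |\<theta> - a_k| \<ge> w_k / 2 this probability is at least 9/16 or at most 7/16 according to the sign of
  \<theta> - a_k, so a majority vote over M ~ 1536 ln N repetitions finds that sign except with
  probability (511/512)^M \<le> N^(-3). Moving the centre by w_k / 4 towards the majority keeps \<theta>
  within w_(k+1) = 3 w_k / 4 of it, and if |\<theta> - a_k| < w_k / 2 either move does. Running as
  many stages K as N channel uses allow gives w_K \<le> M / N; by the union bound \<theta> leaves the
  final interval with probability at most K N^(-3) \<le> N^(-2), so the root-mean-square error is
  O(M / N) = O(log N / N).
\<close>

section \<open>Iterating the noisy phase channel\<close>

lemma matrix_add_rdistrib: "((A::'a::semiring_1^'n^'m) + B) ** C = A ** C + B ** C"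
  by (vector matrix_matrix_mult_def sum.distrib[symmetric] field_simps)

lemma adj_matrix_mult: "adj (A ** B) = adj B ** adj A"
  by (simp add: vec_eq_iff matrix_matrix_mult_def adj_def sum_2 forall_2 mult.commute)

lemma adj_mat_1: "adj (mat 1) = mat 1"
  by (simp add: vec_eq_iff adj_def mat_def forall_2)

lemma Uph_0: "Uph 0 = mat 1"
  by (simp add: vec_eq_iff Uph_def mat_def forall_2)

lemma Uph_mult_Uph: "Uph a ** Uph b = Uph (a + b)"
  by (simp add: vec_eq_iff matrix_matrix_mult_def Uph_def sum_2 forall_2 cis_mult distrib_left)

lemma Uph_unitary: "Uph a ** adj (Uph a) = mat 1"
  by (simp add: vec_eq_iff matrix_matrix_mult_def adj_def Uph_def mat_def sum_2 forall_2
      cis_cnj cis_mult)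

lemma unitary_conj_affine:
  assumes "U ** adj U = mat 1"
  shows "U ** (a *\<^sub>R mat 1 + b *\<^sub>R V) ** adj U = a *\<^sub>R mat 1 + b *\<^sub>R (U ** V ** adj U)"
  by (simp add: matrix_add_ldistrib matrix_add_rdistrib matrix_scalar_ac
      scalar_matrix_assoc[symmetric] assms)

lemma chan_funpow:
  "(chan \<theta> \<epsilon> ^^ m) \<rho> =
     ((1 - (1 - \<epsilon>) ^ m) / 2) *\<^sub>R mat 1
     + ((1 - \<epsilon>) ^ m) *\<^sub>R (Uph (real m * \<theta>) ** \<rho> ** adj (Uph (real m * \<theta>)))"
proof (induction m)
  case 0
  then show ?case by (simp add: Uph_0 adj_mat_1)
next
  case (Suc m)
  define V where "V m = Uph (real m * \<theta>) ** \<rho> ** adj (Uph (real m * \<theta>))" for m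
  have V_Suc: "Uph \<theta> ** V m ** adj (Uph \<theta>) = V (Suc m)"
    by (simp add: V_def matrix_mul_assoc adj_matrix_mult Uph_mult_Uph[symmetric] algebra_simps)
  have coeff: "\<epsilon> / 2 + (1 - \<epsilon>) * ((1 - (1 - \<epsilon>) ^ m) / 2) = (1 - (1 - \<epsilon>) ^ Suc m) / 2"
    by (simp add: field_simps)
  have "(chan \<theta> \<epsilon> ^^ Suc m) \<rho>
      = chan \<theta> \<epsilon> (((1 - (1 - \<epsilon>) ^ m) / 2) *\<^sub>R mat 1 + ((1 - \<epsilon>) ^ m) *\<^sub>R V m)"
    using Suc by (simp add: V_def)
  also have "\<dots> = (\<epsilon> / 2) *\<^sub>R mat 1 + (1 - \<epsilon>) *\<^sub>R
          (((1 - (1 - \<epsilon>) ^ m) / 2) *\<^sub>R mat 1 + ((1 - \<epsilon>) ^ m) *\<^sub>R V (Suc m))"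
    unfolding chan_def unitary_conj_affine[OF Uph_unitary] V_Suc ..
  also have "\<dots> = ((1 - (1 - \<epsilon>) ^ Suc m) / 2) *\<^sub>R mat 1 + ((1 - \<epsilon>) ^ Suc m) *\<^sub>R V (Suc m)"
    by (simp only: scaleR_add_right scaleR_scaleR add.assoc[symmetric]
        scaleR_add_left[symmetric] coeff power_Suc)
  finally show ?case by (simp add: V_def)
qed

section \<open>Expectations over outcome trees\<close>

fun tree_exp :: "(bool list \<Rightarrow> real) \<Rightarrow> nat \<Rightarrow> bool list \<Rightarrow> (bool list \<Rightarrow> real) \<Rightarrow> real" where
  "tree_exp P 0 h f = f h"
| "tree_exp P (Suc r) h f =
     P h * tree_exp P r (h @ [True]) f + (1 - P h) * tree_exp P r (h @ [False]) f"

text \<open>The clamping mirrors that of \<^const>\<open>bernoulli_pmf\<close>, so no bound on \<^const>\<open>hprob\<close>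
  is needed.\<close>
definition plus_prob :: "(bool list \<Rightarrow> qmat \<times> nat) \<Rightarrow> real \<Rightarrow> real \<Rightarrow> bool list \<Rightarrow> real" where
  "plus_prob step \<theta> \<epsilon> h = min 1 (max 0 (hprob ((chan \<theta> \<epsilon> ^^ snd (step h)) (fst (step h)))))"

lemma set_pmf_run: "set_pmf (run step \<theta> \<epsilon> r h) \<subseteq> {xs. length xs = length h + r}"
  by (induction r arbitrary: h) (fastforce simp: set_bind_pmf)+

lemma expectation_run:
  "measure_pmf.expectation (run step \<theta> \<epsilon> r h) f = tree_exp (plus_prob step \<theta> \<epsilon>) r h f"
proof (induction r arbitrary: h)
  case (Suc r)
  have finite_run: "finite (set_pmf (run step \<theta> \<epsilon> r h'))" for h'
    using set_pmf_run finite_list_length by (rule finite_subset)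
  let ?q = "hprob ((chan \<theta> \<epsilon> ^^ snd (step h)) (fst (step h)))"
  have pmf_outcome:
    "pmf (bernoulli_pmf ?q) b = (if b then plus_prob step \<theta> \<epsilon> h else 1 - plus_prob step \<theta> \<epsilon> h)"
    for b
    by (simp add: bernoulli_pmf.rep_eq plus_prob_def)
  have "measure_pmf.expectation (run step \<theta> \<epsilon> (Suc r) h) f
      = (\<Sum>b\<in>UNIV. pmf (bernoulli_pmf ?q) b *
           measure_pmf.expectation (run step \<theta> \<epsilon> r (h @ [b])) f)"
    by (simp add: pmf_expectation_bind[of UNIV] finite_run)
  then show ?case
    by (simp add: UNIV_bool pmf_outcome Suc.IH)
qed simp

lemma tree_exp_add: "tree_exp P (r + s) h f = tree_exp P r h (\<lambda>h'. tree_exp P s h' f)"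
  by (induction r arbitrary: h) auto

lemma tree_exp_const: "tree_exp P r h (\<lambda>_. c) = c"
  by (induction r arbitrary: h) (auto simp: algebra_simps)

lemma tree_exp_add_const: "tree_exp P r h (\<lambda>x. f x + c) = tree_exp P r h f + c"
  by (induction r arbitrary: h) (auto simp: algebra_simps)

lemma tree_exp_mult_const: "tree_exp P r h (\<lambda>x. c * f x) = c * tree_exp P r h f"
  by (induction r arbitrary: h) (auto simp: algebra_simps)

lemma tree_exp_mono:
  assumes P01: "\<And>h. 0 \<le> P h \<and> P h \<le> 1"
    and le: "\<And>bs. length bs = r \<Longrightarrow> f (h @ bs) \<le> g (h @ bs)"
  shows "tree_exp P r h f \<le> tree_exp P r h g"
  using le
proof (induction r arbitrary: h)
  case 0
  then show ?case using 0[of "[]"] by simp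
next
  case (Suc r)
  have "tree_exp P r (h @ [b]) f \<le> tree_exp P r (h @ [b]) g" for b
    using Suc.prems[of "b # _"] by (intro Suc.IH) auto
  then show ?case
    using P01[of h] by (simp add: add_mono mult_left_mono)
qed

lemma tree_exp_power_count:
  assumes "\<And>bs. length bs < r \<Longrightarrow> P (hs @ bs) = p"
  shows "tree_exp P r hs (\<lambda>h. x ^ count_list (drop (length hs) h) True) = ((1 - p) + p * x) ^ r"
proof -
  have "tree_exp P s (hs @ bs) (\<lambda>h. x ^ count_list (drop (length hs) h) True)
        = x ^ count_list bs True * ((1 - p) + p * x) ^ s" if "length bs + s = r" for bs s
    using that
  proof (induction s arbitrary: bs)
    case (Suc s)
    have "P (hs @ bs) = p" using Suc.prems assms by simp
    then show ?case using Suc.IH[of "bs @ [True]"] Suc.IH[of "bs @ [False]"] Suc.prems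
      by (simp add: algebra_simps)
  qed simp
  from this[of "[]" r] show ?thesis by simp
qed

text \<open>Chernoff bounds: with c the number of + outcomes, the indicator is dominated by
  y^(r - 2c), resp. y^(2c - r), for y = 17/16.\<close>
lemma tree_exp_no_majority_le:
  assumes P01: "\<And>h. 0 \<le> P h \<and> P h \<le> 1"
    and block: "\<And>bs. length bs < r \<Longrightarrow> P (hs @ bs) = p" and p: "9/16 \<le> p" "p \<le> 1"
  shows "tree_exp P r hs (\<lambda>h. if 2 * count_list (drop (length hs) h) True \<le> r then 1 else 0)
           \<le> (511/512) ^ r"
proof -
  define y :: real where "y = 17/16"
  have "tree_exp P r hs (\<lambda>h. if 2 * count_list (drop (length hs) h) True \<le> r then 1 else 0)
      \<le> tree_exp P r hs (\<lambda>h. y ^ r * (1 / y\<^sup>2) ^ count_list (drop (length hs) h) True)"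
  proof (rule tree_exp_mono[OF P01])
    fix bs :: "bool list"
    have "(y\<^sup>2) ^ c \<le> y ^ r" if "2 * c \<le> r" for c
      unfolding power_mult[symmetric] using that by (intro power_increasing) (auto simp: y_def)
    then show "(if 2 * count_list (drop (length hs) (hs @ bs)) True \<le> r then 1 else 0)
        \<le> y ^ r * (1 / y\<^sup>2) ^ count_list (drop (length hs) (hs @ bs)) True"
      by (simp add: y_def power_one_over field_simps)
  qed
  also have "\<dots> = y ^ r * ((1 - p) + p * (1 / y\<^sup>2)) ^ r"
    by (simp only: tree_exp_mult_const tree_exp_power_count[where P = P and hs = hs, OF block])
  also have "\<dots> = (y * (1 - p) + p / y) ^ r"
    by (simp add: power_mult_distrib[symmetric] y_def field_simps)
  also have "\<dots> \<le> (511/512) ^ r"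
    using p by (intro power_mono) (auto simp: y_def field_simps)
  finally show ?thesis .
qed

lemma tree_exp_majority_le:
  assumes P01: "\<And>h. 0 \<le> P h \<and> P h \<le> 1"
    and block: "\<And>bs. length bs < r \<Longrightarrow> P (hs @ bs) = p" and p: "0 \<le> p" "p \<le> 7/16"
  shows "tree_exp P r hs (\<lambda>h. if r < 2 * count_list (drop (length hs) h) True then 1 else 0)
           \<le> (511/512) ^ r"
proof -
  define y :: real where "y = 17/16"
  have "tree_exp P r hs (\<lambda>h. if r < 2 * count_list (drop (length hs) h) True then 1 else 0)
      \<le> tree_exp P r hs (\<lambda>h. (1 / y) ^ r * (y\<^sup>2) ^ count_list (drop (length hs) h) True)"
  proof (rule tree_exp_mono[OF P01])
    fix bs :: "bool list"
    have "y ^ r \<le> (y\<^sup>2) ^ c" if "r < 2 * c" for c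
      unfolding power_mult[symmetric] using that by (intro power_increasing) (auto simp: y_def)
    then show "(if r < 2 * count_list (drop (length hs) (hs @ bs)) True then 1 else 0)
        \<le> (1 / y) ^ r * (y\<^sup>2) ^ count_list (drop (length hs) (hs @ bs)) True"
      by (simp add: y_def power_one_over field_simps)
  qed
  also have "\<dots> = (1 / y) ^ r * ((1 - p) + p * y\<^sup>2) ^ r"
    by (simp only: tree_exp_mult_const tree_exp_power_count[where P = P and hs = hs, OF block])
  also have "\<dots> = ((1 - p) / y + p * y) ^ r"
    by (simp add: power_mult_distrib[symmetric] y_def field_simps)
  also have "\<dots> \<le> (511/512) ^ r"
    using p by (intro power_mono) (auto simp: y_def field_simps)
  finally show ?thesis .
qed

section \<open>An adaptive bisection protocol\<close>

lemma sin_ge_quarter: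
  assumes "pi/8 \<le> x" "x \<le> pi/2"
  shows "1/4 \<le> sin x"
proof -
  have "sqrt 2 / 2 = 2 * sin (pi/8) * cos (pi/8)"
    using sin_double[of "pi/8"] by (simp add: sin_45)
  also have "\<dots> \<le> 2 * sin (pi/8)"
    using sin_ge_zero[of "pi/8"] cos_le_one[of "pi/8"] by (simp add: mult_left_le)
  also have "\<dots> \<le> 2 * sin x"
    using assms by (simp add: sin_monotone_2pi_le)
  finally show ?thesis
    using real_sqrt_ge_one[of 2] by linarith
qed

lemma one_plus_sin_half_ge:
  fixes d m w x :: real
  assumes "1/2 \<le> d" "1/8 \<le> m * w" "m * w \<le> 1/4" "w/2 \<le> x" "x \<le> w"
  shows "9/16 \<le> (1 + d * sin (2*pi*m*x)) / 2"
proof -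
  have "0 \<le> w" using assms(4,5) by linarith
  then have "0 < m"
    using assms(2) mult_nonpos_nonneg[of m w] by fastforce
  have "m * (w/2) \<le> m * x" "m * x \<le> m * w"
    using assms(4,5) \<open>0 < m\<close> by (simp_all add: mult_left_mono)
  then have "1/16 \<le> m * x" "m * x \<le> 1/4"
    using assms(2,3) by simp_all
  then have "pi/8 \<le> 2*pi*m*x" "2*pi*m*x \<le> pi/2"
    using mult_left_mono[of "1/16" "m*x" "2*pi"] mult_left_mono[of "m*x" "1/4" "2*pi"]
    by (simp_all add: mult.assoc)
  then have "1/4 \<le> sin (2*pi*m*x)"
    by (rule sin_ge_quarter)
  then have "1/2 * (1/4) \<le> d * sin (2*pi*m*x)"
    using assms(1) by (intro mult_mono) auto
  then show ?thesis by simp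
qed

definition width :: "nat \<Rightarrow> real" where
  "width k = (1/4) * (3/4) ^ k"

definition stage_uses :: "nat \<Rightarrow> nat" where
  "stage_uses k = nat \<lfloor>(4/3::real) ^ k\<rfloor>"

definition block_count :: "nat \<Rightarrow> nat \<Rightarrow> bool list \<Rightarrow> nat" where
  "block_count M k h = count_list (take M (drop (k * M) h)) True"

fun centre :: "nat \<Rightarrow> nat \<Rightarrow> bool list \<Rightarrow> real" where
  "centre M 0 h = 1/4"
| "centre M (Suc k) h =
     centre M k h + (if M < 2 * block_count M k h then width k / 4 else - (width k / 4))"

text \<open>The pure state (|0> + e^(i\<phi>) |1>) / sqrt 2.\<close>
definition probe :: "real \<Rightarrow> qmat" where
  "probe \<phi> = (\<chi> i j. if i = j then 1/2 else if i = 0 then cis (- \<phi>) / 2 else cis \<phi> / 2)"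

definition probe_phase :: "nat \<Rightarrow> nat \<Rightarrow> bool list \<Rightarrow> real" where
  "probe_phase M k h = - 2 * pi * real (stage_uses k) * centre M k h - pi/2"

definition repetitions :: "nat \<Rightarrow> nat" where
  "repetitions N = nat \<lceil>1536 * ln (real N)\<rceil>"

definition stages_cost :: "nat \<Rightarrow> nat \<Rightarrow> nat" where
  "stages_cost N k = repetitions N * (\<Sum>j<k. stage_uses j)"

definition num_stages :: "nat \<Rightarrow> nat" where
  "num_stages N = (GREATEST k. stages_cost N k \<le> N)"

text \<open>Round \<open>j\<close> belongs to stage \<open>j div repetitions N\<close>. A last round spends the channel uses
  left over by the stages; its outcome is ignored by the estimator.\<close>
definition protocol :: "nat \<Rightarrow> bool list \<Rightarrow> qmat \<times> nat" where
  "protocol N h =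
     (if length h < num_stages N * repetitions N
      then (probe (probe_phase (repetitions N) (length h div repetitions N) h),
            stage_uses (length h div repetitions N))
      else (probe 0, N - stages_cost N (num_stages N)))"

definition estimate :: "nat \<Rightarrow> bool list \<Rightarrow> real" where
  "estimate N h = max 0 (min (1/2) (centre (repetitions N) (num_stages N) h))"

lemma probe_density: "density (probe \<phi>)"
proof -
  have "0 \<le> Re (\<Sum>i\<in>UNIV. \<Sum>j\<in>UNIV. cnj (v $ i) * probe \<phi> $ i $ j * v $ j)" for v :: "complex ^ 2"
  proof -
    define z where "z = cis \<phi> * v $ 2 + v $ 1"
    have "(\<Sum>i\<in>UNIV. \<Sum>j\<in>UNIV. cnj (v $ i) * probe \<phi> $ i $ j * v $ j) = cnj z * z / 2"
      by (simp add: sum_2 probe_def z_def algebra_simps cis_cnj cis_mult add_divide_distrib)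
    then show ?thesis by (simp only:) simp
  qed
  then show ?thesis
    by (simp add: density_def vec_eq_iff adj_def probe_def forall_2 sum_2 cis_cnj)
qed

lemma hprob_affine: "hprob (a *\<^sub>R mat 1 + b *\<^sub>R V) = a + b * hprob V"
  by (simp add: hprob_def sum_2 mat_def field_simps)

lemma hprob_chan_funpow_probe:
  "hprob ((chan \<theta> \<epsilon> ^^ m) (probe \<phi>)) = (1 + (1 - \<epsilon>) ^ m * cos (2 * pi * (real m * \<theta>) + \<phi>)) / 2"
proof -
  define t where "t = 2 * pi * (real m * \<theta>) + \<phi>"
  have cos_neg: "cos (- \<phi> - x) = cos (\<phi> + x)" for x
    using cos_minus[of "\<phi> + x"] by simp
  have rotated: "hprob (Uph (real m * \<theta>) ** probe \<phi> ** adj (Uph (real m * \<theta>))) = (1 + cos t) / 2"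
    by (simp add: cos_neg hprob_def sum_2 matrix_matrix_mult_def Uph_def adj_def probe_def
        cis_cnj t_def cis_mult algebra_simps add_divide_distrib)
  show ?thesis
    unfolding chan_funpow hprob_affine rotated t_def by (simp add: field_simps)
qed

lemma block_count_append: "k * M + M \<le> length h \<Longrightarrow> block_count M k (h @ h') = block_count M k h"
  by (simp add: block_count_def)

lemma centre_append: "k * M \<le> length h \<Longrightarrow> centre M k (h @ h') = centre M k h"
  by (induction k) (simp_all add: block_count_append)

lemma centre_Suc_append:
  assumes "length h = k * M" "length bs = M"
  shows "centre M (Suc k) (h @ bs)
    = centre M k h + (if M < 2 * count_list bs True then width k / 4 else - (width k / 4))"
  using assms by (simp add: centre_append block_count_def)

lemma stage_uses_bounds: "1 \<le> stage_uses k" "(4/3) ^ k / 2 \<le> real (stage_uses k)"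
  "real (stage_uses k) \<le> (4/3) ^ k"
proof -
  define t :: real where "t = (4/3) ^ k"
  have "1 \<le> t" by (simp add: t_def one_le_power)
  then have uses: "real (stage_uses k) = of_int \<lfloor>t\<rfloor>" "1 \<le> \<lfloor>t\<rfloor>"
    by (simp_all add: stage_uses_def t_def)
  then have "1 \<le> real (stage_uses k)" by simp
  then show "1 \<le> stage_uses k" by simp
  show "t / 2 \<le> real (stage_uses k)" "real (stage_uses k) \<le> t"
    using uses real_of_int_floor_gt_diff_one[of t] of_int_floor_le[of t] by linarith+
qed

lemma stage_uses_width: "1/8 \<le> real (stage_uses k) * width k" "real (stage_uses k) * width k \<le> 1/4"
proof -
  have "(4/3::real) ^ k * (3/4) ^ k = 1" by (simp flip: power_mult_distrib)
  then show "1/8 \<le> real (stage_uses k) * width k" "real (stage_uses k) * width k \<le> 1/4"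
    using mult_right_mono[OF stage_uses_bounds(2), of "(3/4) ^ k" k]
      mult_right_mono[OF stage_uses_bounds(3), of "(3/4) ^ k" k]
    by (simp_all add: width_def)
qed

lemma repetitions_bounds:
  assumes "3 \<le> N"
  shows "2 \<le> repetitions N" "1536 * ln (real N) \<le> repetitions N"
    "repetitions N \<le> 1536 * ln (real N) + 1"
proof -
  have "exp 1 \<le> real N" using e_less_272 assms by simp
  then have "1 \<le> ln (real N)" using assms by (simp add: ln_ge_iff)
  then show "2 \<le> repetitions N" "1536 * ln (real N) \<le> repetitions N"
    "repetitions N \<le> 1536 * ln (real N) + 1"
    unfolding repetitions_def by linarith+
qed

lemma le_stages_cost: "0 < repetitions N \<Longrightarrow> k \<le> stages_cost N k"
  using sum_mono[of "{..<k}" "\<lambda>_. 1" stage_uses] stage_uses_bounds(1)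
  by (auto simp: stages_cost_def intro: le_trans)

lemma num_stages_bounds:
  assumes "0 < repetitions N"
  shows "stages_cost N (num_stages N) \<le> N" "N < stages_cost N (Suc (num_stages N))"
    "num_stages N \<le> N"
proof -
  have bound: "\<And>k. stages_cost N k \<le> N \<Longrightarrow> k \<le> N"
    using le_stages_cost[OF assms] le_trans by blast
  have "stages_cost N 0 \<le> N" by (simp add: stages_cost_def)
  then show cost: "stages_cost N (num_stages N) \<le> N"
    unfolding num_stages_def by (rule GreatestI_nat[OF _ bound])
  then show "num_stages N \<le> N" by (rule bound)
  show "N < stages_cost N (Suc (num_stages N))"
    using Greatest_le_nat[of "\<lambda>k. stages_cost N k \<le> N" "Suc (num_stages N)", OF _ bound]
    unfolding num_stages_def[symmetric] by fastforce
qed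

lemma valid_protocol_protocol:
  assumes M: "0 < repetitions N"
  shows "valid_protocol N (num_stages N * repetitions N + 1) (protocol N)"
  unfolding valid_protocol_def
proof (intro conjI allI impI)
  fix h :: "bool list"
  show "density (fst (protocol N h))" by (simp add: protocol_def probe_density)
next
  fix h :: "bool list"
  let ?M = "repetitions N" and ?K = "num_stages N"
  assume len: "length h = ?K * ?M + 1"
  have "(\<Sum>j<?K * ?M. snd (protocol N (take j h))) = (\<Sum>j<?K * ?M. stage_uses (j div ?M))"
    by (intro sum.cong) (auto simp: protocol_def len min_def)
  also have "\<dots> = (\<Sum>k<?K. \<Sum>j\<in>{k * ?M..<k * ?M + ?M}. stage_uses (j div ?M))"
    by (rule sum.nat_group[symmetric])
  also have "\<dots> = (\<Sum>k<?K. \<Sum>j\<in>{k * ?M..<k * ?M + ?M}. stage_uses k)"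
    by (intro sum.cong refl) (auto simp: div_nat_eqI algebra_simps)
  also have "\<dots> = stages_cost N ?K"
    by (simp add: stages_cost_def sum_distrib_left mult.commute)
  finally show "(\<Sum>j<?K * ?M + 1. snd (protocol N (take j h))) = N"
    using num_stages_bounds(1)[OF M] by (simp add: protocol_def len)
qed

lemma width_num_stages:
  assumes "3 \<le> N"
  shows "width (num_stages N) * N \<le> repetitions N"
proof -
  let ?K = "num_stages N" and ?M = "repetitions N"
  have M: "0 < ?M" using repetitions_bounds(1)[OF assms] by simp
  have "real N < stages_cost N (Suc ?K)"
    using num_stages_bounds(2)[OF M] by linarith
  also have "\<dots> = ?M * (\<Sum>j<Suc ?K. real (stage_uses j))"
    by (simp add: stages_cost_def)
  also have "\<dots> \<le> ?M * (\<Sum>j<Suc ?K. (4/3) ^ j)"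
    by (intro mult_left_mono sum_mono) (auto simp: stage_uses_bounds)
  also have "\<dots> = ?M * (3 * ((4/3) ^ Suc ?K - 1))"
    by (simp add: geometric_sum)
  also have "\<dots> \<le> ?M * (4 * (4/3) ^ ?K)"
    by (intro mult_left_mono) auto
  finally have "real N \<le> ?M * (4 * (4/3) ^ ?K)" by simp
  then have "width ?K * N \<le> width ?K * (?M * (4 * (4/3) ^ ?K))"
    by (intro mult_left_mono) (auto simp: width_def)
  also have "\<dots> = ?M"
    by (simp add: width_def flip: power_mult_distrib)
  finally show ?thesis .
qed

lemma num_stages_escape_bound:
  assumes "3 \<le> N"
  shows "num_stages N * (511/512) ^ repetitions N \<le> 1 / (real N)\<^sup>2"
proof -
  have N: "0 < real N" using assms by simp
  have "(511/512::real) ^ repetitions N \<le> exp (- 1/512) ^ repetitions N"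
    using exp_ge_add_one_self[of "- 1/512"] by (intro power_mono) auto
  also have "\<dots> = exp (repetitions N * (- 1/512))"
    by (rule exp_of_nat_mult[symmetric])
  also have "\<dots> \<le> exp (real 3 * (- ln (real N)))"
    using repetitions_bounds(2)[OF assms] by simp
  also have "\<dots> = exp (- ln (real N)) ^ 3"
    by (rule exp_of_nat_mult)
  also have "\<dots> = 1 / (real N) ^ 3"
    using N by (simp add: exp_minus power_one_over inverse_eq_divide)
  finally have "num_stages N * (511/512::real) ^ repetitions N \<le> real N * (1 / (real N) ^ 3)"
    using num_stages_bounds(3) repetitions_bounds(1)[OF assms] by (intro mult_mono) auto
  also have "\<dots> = 1 / (real N)\<^sup>2"
    using N by (simp add: power2_eq_square power3_eq_cube)
  finally show ?thesis .
qed

section \<open>Error analysis\<close>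

locale estimation_setting =
  fixes N :: nat and \<theta> \<epsilon> :: real
  assumes N_ge_3: "3 \<le> N" and \<theta>_nonneg: "0 \<le> \<theta>" and \<theta>_le_half: "\<theta> \<le> 1/2"
    and \<epsilon>_nonneg: "0 \<le> \<epsilon>" and N_\<epsilon>_le_1: "real N * \<epsilon> \<le> 1"
begin

abbreviation "M \<equiv> repetitions N"
abbreviation "K \<equiv> num_stages N"
abbreviation "P \<equiv> plus_prob (protocol N) \<theta> \<epsilon>"

lemma M_ge_2: "2 \<le> M"
  using repetitions_bounds(1)[OF N_ge_3] .

lemma P_bounds: "0 \<le> P h \<and> P h \<le> 1"
  by (simp add: plus_prob_def)

lemma decay_bounds:
  assumes "k < K"
  shows "1/2 \<le> (1 - \<epsilon>) ^ stage_uses k" "(1 - \<epsilon>) ^ stage_uses k \<le> 1"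
proof -
  have "2 * stage_uses k \<le> M * stage_uses k"
    using M_ge_2 by simp
  also have "\<dots> \<le> stages_cost N K"
    unfolding stages_cost_def using assms by (intro mult_left_mono member_le_sum) auto
  also have "\<dots> \<le> N"
    using num_stages_bounds(1) M_ge_2 by simp
  finally have "2 * real (stage_uses k) * \<epsilon> \<le> real N * \<epsilon>"
    using \<epsilon>_nonneg by (intro mult_right_mono) linarith+
  then have uses_\<epsilon>: "real (stage_uses k) * \<epsilon> \<le> 1/2"
    using N_\<epsilon>_le_1 by linarith
  have "\<epsilon> \<le> 1"
    using mult_right_mono[of 1 "real N" \<epsilon>] N_ge_3 \<epsilon>_nonneg N_\<epsilon>_le_1 by simp
  then have "1 + real (stage_uses k) * (- \<epsilon>) \<le> (1 + - \<epsilon>) ^ stage_uses k"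
    by (intro Bernoulli_inequality) simp
  then show "1/2 \<le> (1 - \<epsilon>) ^ stage_uses k"
    using uses_\<epsilon> by simp
  show "(1 - \<epsilon>) ^ stage_uses k \<le> 1"
    using \<epsilon>_nonneg \<open>\<epsilon> \<le> 1\<close> by (intro power_le_one) auto
qed

lemma plus_prob_stage:
  assumes len: "length h = k * M" and "k < K" and "length bs < M"
  shows "P (h @ bs)
    = (1 + (1 - \<epsilon>) ^ stage_uses k * sin (2 * pi * stage_uses k * (\<theta> - centre M k h))) / 2"
proof -
  let ?d = "(1 - \<epsilon>) ^ stage_uses k" and ?x = "2 * pi * stage_uses k * (\<theta> - centre M k h)"
  have "k * M + M \<le> K * M"
    using \<open>k < K\<close> by (metis Suc_leI add.commute mult_Suc mult_le_mono1)
  then have stage: "(length h + length bs) div M = k" "length h + length bs < K * M"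
    using assms by (simp_all add: div_nat_eqI algebra_simps)
  have phase: "2 * pi * (real (stage_uses k) * \<theta>) + probe_phase M k (h @ bs) = ?x - pi/2"
    using centre_append[of k M h bs] len by (simp add: probe_phase_def algebra_simps)
  have "hprob ((chan \<theta> \<epsilon> ^^ snd (protocol N (h @ bs))) (fst (protocol N (h @ bs))))
      = (1 + ?d * sin ?x) / 2"
    by (simp add: protocol_def stage hprob_chan_funpow_probe phase cos_diff)
  moreover have "\<bar>?d * sin ?x\<bar> \<le> 1"
    using decay_bounds[OF \<open>k < K\<close>] abs_sin_le_one[of ?x] by (simp add: abs_mult mult_le_one)
  ultimately show ?thesis
    by (simp add: plus_prob_def abs_le_iff)
qed

definition outside :: "nat \<Rightarrow> bool list \<Rightarrow> real" where
  "outside k h = (if \<bar>\<theta> - centre M k h\<bar> \<le> width k then 0 else 1)"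

lemma stage_failure:
  assumes len: "length h = k * M" and "k < K" and inside: "\<bar>\<theta> - centre M k h\<bar> \<le> width k"
  shows "tree_exp P M h (outside (Suc k)) \<le> (511/512) ^ M"
proof -
  define a w m d where "a = centre M k h" and "w = width k"
    and "m = real (stage_uses k)" and "d = (1 - \<epsilon>) ^ stage_uses k"
  define p where "p = (1 + d * sin (2 * pi * m * (\<theta> - a))) / 2"
  have block: "\<And>bs. length bs < M \<Longrightarrow> P (h @ bs) = p"
    using plus_prob_stage[OF len \<open>k < K\<close>] by (simp add: p_def a_def d_def m_def)
  have p: "0 \<le> p" "p \<le> 1"
    using block[of "[]"] P_bounds[of h] M_ge_2 by auto
  have d: "1/2 \<le> d" using decay_bounds[OF \<open>k < K\<close>] by (simp add: d_def)
  have mw: "1/8 \<le> m * w" "m * w \<le> 1/4" using stage_uses_width[of k] by (simp_all add: m_def w_def)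
  have "0 < w" by (simp add: w_def width_def)
  have width_Suc: "width (Suc k) = 3 * w / 4" by (simp add: w_def width_def)
  have outside_Suc: "outside (Suc k) (h @ bs)
      = (if \<bar>\<theta> - (a + (if M < 2 * count_list bs True then w/4 else - (w/4)))\<bar> \<le> 3 * w / 4
         then 0 else 1)"
    if "length bs = M" for bs
    by (simp only: outside_def centre_Suc_append[OF len that] width_Suc a_def w_def)
  consider (near) "\<bar>\<theta> - a\<bar> < w/2" | (above) "w/2 \<le> \<theta> - a" | (below) "\<theta> - a \<le> - (w/2)"
    by linarith
  then show ?thesis
  proof cases
    case near
    then have "tree_exp P M h (outside (Suc k)) \<le> tree_exp P M h (\<lambda>_. 0)"
      using \<open>0 < w\<close> by (intro tree_exp_mono[OF P_bounds]) (auto simp: outside_Suc split: abs_split)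
    then show ?thesis
      using tree_exp_const[of P M h 0] zero_le_power[of "511/512::real" M] by linarith
  next
    case above
    have "9/16 \<le> p"
      using one_plus_sin_half_ge[OF d mw above] inside by (simp add: p_def a_def w_def)
    have "tree_exp P M h (outside (Suc k))
        \<le> tree_exp P M h (\<lambda>h'. if 2 * count_list (drop (length h) h') True \<le> M then 1 else 0)"
      using above inside by (intro tree_exp_mono[OF P_bounds]) (auto simp: outside_Suc a_def w_def)
    also have "\<dots> \<le> (511/512) ^ M"
      by (rule tree_exp_no_majority_le[where P = P and hs = h, OF P_bounds block \<open>9/16 \<le> p\<close> p(2)])
    finally show ?thesis .
  next
    case below
    have "9/16 \<le> (1 + d * sin (2 * pi * m * (a - \<theta>))) / 2"
      using one_plus_sin_half_ge[OF d mw, of "a - \<theta>"] below inside by (simp add: a_def w_def)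
    then have "p \<le> 7/16"
      using sin_minus[of "2 * pi * m * (a - \<theta>)"] by (simp add: p_def algebra_simps)
    have "tree_exp P M h (outside (Suc k))
        \<le> tree_exp P M h (\<lambda>h'. if M < 2 * count_list (drop (length h) h') True then 1 else 0)"
      using below inside by (intro tree_exp_mono[OF P_bounds]) (auto simp: outside_Suc a_def w_def)
    also have "\<dots> \<le> (511/512) ^ M"
      by (rule tree_exp_majority_le[where P = P and hs = h, OF P_bounds block p(1) \<open>p \<le> 7/16\<close>])
    finally show ?thesis .
  qed
qed

lemma escape_probability: "k \<le> K \<Longrightarrow> tree_exp P (k * M) [] (outside k) \<le> k * (511/512) ^ M"
proof (induction k)
  case 0
  have "outside 0 [] = 0"
    using \<theta>_nonneg \<theta>_le_half by (auto simp: outside_def width_def split: abs_split)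
  then show ?case by simp
next
  case (Suc k)
  have "tree_exp P (Suc k * M) [] (outside (Suc k))
      = tree_exp P (k * M) [] (\<lambda>h. tree_exp P M h (outside (Suc k)))"
    by (simp add: tree_exp_add[symmetric] add.commute)
  also have "\<dots> \<le> tree_exp P (k * M) [] (\<lambda>h. outside k h + (511/512) ^ M)"
  proof (rule tree_exp_mono[OF P_bounds])
    fix bs :: "bool list"
    assume len: "length bs = k * M"
    show "tree_exp P M ([] @ bs) (outside (Suc k)) \<le> outside k ([] @ bs) + (511/512) ^ M"
    proof (cases "\<bar>\<theta> - centre M k bs\<bar> \<le> width k")
      case True
      then show ?thesis
        using stage_failure[OF len _ True] Suc.prems by (simp add: outside_def)
    next
      case False
      have "tree_exp P M bs (outside (Suc k)) \<le> tree_exp P M bs (\<lambda>_. 1)"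
        by (rule tree_exp_mono[OF P_bounds]) (simp add: outside_def)
      moreover have "outside k bs = 1"
        using False by (simp add: outside_def)
      ultimately have "tree_exp P M bs (outside (Suc k)) \<le> outside k bs + (511/512) ^ M"
        using tree_exp_const[of P M bs 1] zero_le_power[of "511/512::real" M] by linarith
      then show ?thesis by simp
    qed
  qed
  also have "\<dots> = tree_exp P (k * M) [] (outside k) + (511/512) ^ M"
    by (rule tree_exp_add_const)
  also have "\<dots> \<le> Suc k * (511/512) ^ M"
    using Suc by (simp add: algebra_simps)
  finally show ?case .
qed

lemma estimate_dist:
  "\<bar>estimate N h - \<theta>\<bar> \<le> \<bar>\<theta> - centre M K h\<bar>"
  "\<bar>estimate N h - \<theta>\<bar> \<le> 1/2"
  using \<theta>_nonneg \<theta>_le_half by (auto simp: estimate_def max_def min_def abs_if)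

lemma expected_square_error:
  "tree_exp P (K * M + 1) [] (\<lambda>h. (estimate N h - \<theta>)\<^sup>2) \<le> (width K)\<^sup>2 + K * (511/512) ^ M / 4"
proof -
  have "tree_exp P (K * M + 1) [] (\<lambda>h. (estimate N h - \<theta>)\<^sup>2)
      = tree_exp P (K * M) [] (\<lambda>h. tree_exp P 1 h (\<lambda>h. (estimate N h - \<theta>)\<^sup>2))"
    by (rule tree_exp_add)
  also have "\<dots> \<le> tree_exp P (K * M) [] (\<lambda>h. 1/4 * outside K h + (width K)\<^sup>2)"
  proof (rule tree_exp_mono[OF P_bounds])
    fix bs :: "bool list"
    assume len: "length bs = K * M"
    have "estimate N (bs @ [b]) = estimate N bs" for b
      using centre_append[of K M bs "[b]"] len by (simp add: estimate_def)
    then have "tree_exp P 1 bs (\<lambda>h. (estimate N h - \<theta>)\<^sup>2) = (estimate N bs - \<theta>)\<^sup>2"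
      by (simp add: algebra_simps)
    also have "\<dots> \<le> 1/4 * outside K bs + (width K)\<^sup>2"
    proof (cases "\<bar>\<theta> - centre M K bs\<bar> \<le> width K")
      case True
      then have "\<bar>estimate N bs - \<theta>\<bar> \<le> width K"
        using estimate_dist(1)[of bs] by linarith
      then have "(estimate N bs - \<theta>)\<^sup>2 \<le> (width K)\<^sup>2"
        by (metis abs_ge_zero power2_abs power_mono)
      then show ?thesis
        using True by (simp add: outside_def)
    next
      case False
      have "(estimate N bs - \<theta>)\<^sup>2 \<le> (1/2)\<^sup>2"
        using estimate_dist(2)[of bs] by (metis abs_ge_zero power2_abs power_mono)
      also have "\<dots> = 1/4"
        by (simp add: power2_eq_square)
      finally have "(estimate N bs - \<theta>)\<^sup>2 \<le> 1/4" .
      moreover have "outside K bs = 1"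
        using False by (simp add: outside_def)
      ultimately show ?thesis
        using zero_le_power2[of "width K"] by linarith
    qed
    finally show "tree_exp P 1 ([] @ bs) (\<lambda>h. (estimate N h - \<theta>)\<^sup>2)
        \<le> 1/4 * outside K ([] @ bs) + (width K)\<^sup>2"
      by simp
  qed
  also have "\<dots> = 1/4 * tree_exp P (K * M) [] (outside K) + (width K)\<^sup>2"
    by (simp only: tree_exp_add_const tree_exp_mult_const)
  also have "\<dots> \<le> (width K)\<^sup>2 + K * (511/512) ^ M / 4"
    using escape_probability[of K] by simp
  finally show ?thesis .
qed

lemma rmse_protocol: "rmse (protocol N) (K * M + 1) (estimate N) \<theta> \<epsilon> \<le> 1538 * ln N / N"
proof -
  have N: "0 < real N" using N_ge_3 by simp
  define w b where "w = real M / real N" and "b = 1 / (2 * real N)"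
  have "0 \<le> w" "0 \<le> b" by (simp_all add: w_def b_def)
  have "width K \<le> w"
    using width_num_stages[OF N_ge_3] N by (simp add: w_def field_simps)
  have "rmse (protocol N) (K * M + 1) (estimate N) \<theta> \<epsilon>
      \<le> sqrt ((width K)\<^sup>2 + K * (511/512) ^ M / 4)"
    unfolding rmse_def expectation_run by (rule real_sqrt_le_mono[OF expected_square_error])
  also have "\<dots> \<le> sqrt ((w + b)\<^sup>2)"
  proof (rule real_sqrt_le_mono)
    have "(width K)\<^sup>2 \<le> w\<^sup>2"
      using \<open>width K \<le> w\<close> by (intro power_mono) (auto simp: width_def)
    moreover have "K * (511/512) ^ M / 4 \<le> b\<^sup>2"
      using num_stages_escape_bound[OF N_ge_3] by (simp add: b_def power2_eq_square)
    ultimately show "(width K)\<^sup>2 + K * (511/512) ^ M / 4 \<le> (w + b)\<^sup>2"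
      unfolding power2_sum using mult_nonneg_nonneg[OF \<open>0 \<le> w\<close> \<open>0 \<le> b\<close>] by linarith
  qed
  also have "\<dots> = w + b"
    using \<open>0 \<le> w\<close> \<open>0 \<le> b\<close> by simp
  also have "\<dots> = (real M + 1/2) / real N"
    using N by (simp add: w_def b_def field_simps)
  also have "\<dots> \<le> 1538 * ln N / N"
  proof -
    have "exp 1 \<le> real N" using e_less_272 N_ge_3 by simp
    then have "1 \<le> ln (real N)" using N by (simp add: ln_ge_iff)
    then have "real M + 1/2 \<le> 1538 * ln N"
      using repetitions_bounds(3)[OF N_ge_3] by linarith
    then show ?thesis using N by (intro divide_right_mono) auto
  qed
  finally show ?thesis .
qed

end

theorem mainTheorem13:
  shows "(\<forall>\<theta> \<epsilon> \<rho> m. 0 \<le> \<theta> \<longrightarrow> \<theta> \<le> 1/2 \<longrightarrow> 0 \<le> \<epsilon> \<longrightarrow> density \<rho> \<longrightarrow> 1 \<le> m \<longrightarrow>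
            (chan \<theta> \<epsilon> ^^ m) \<rho> =
              ((1 - (1 - \<epsilon>) ^ m) / 2) *\<^sub>R mat 1
              + ((1 - \<epsilon>) ^ m) *\<^sub>R (Uph (real m * \<theta>) ** \<rho> ** adj (Uph (real m * \<theta>))))
       \<and> (\<exists>C N0. \<forall>N::nat. N \<ge> N0 \<longrightarrow>
            (\<exists>R step est. valid_protocol N R step \<and>
               (\<forall>\<theta> \<epsilon>. 0 \<le> \<theta> \<longrightarrow> \<theta> \<le> 1/2 \<longrightarrow> 0 \<le> \<epsilon> \<longrightarrow> real N * \<epsilon> \<le> 1 \<longrightarrow>
                  rmse step R est \<theta> \<epsilon> \<le> C * ln (real N) / real N)))"
proof (intro conjI exI allI impI)
  show "(chan \<theta> \<epsilon> ^^ m) \<rho> = ((1 - (1 - \<epsilon>) ^ m) / 2) *\<^sub>R mat 1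
      + ((1 - \<epsilon>) ^ m) *\<^sub>R (Uph (real m * \<theta>) ** \<rho> ** adj (Uph (real m * \<theta>)))"
    for \<theta> \<epsilon> :: real and \<rho> m
    by (rule chan_funpow)
  fix N :: nat
  assume "3 \<le> N"
  then have "0 < repetitions N" using repetitions_bounds(1) by fastforce
  then show "valid_protocol N (num_stages N * repetitions N + 1) (protocol N)"
    by (rule valid_protocol_protocol)
  fix \<theta> \<epsilon> :: real
  assume "0 \<le> \<theta>" "\<theta> \<le> 1/2" "0 \<le> \<epsilon>" "real N * \<epsilon> \<le> 1"
  with \<open>3 \<le> N\<close> interpret estimation_setting N \<theta> \<epsilon> by unfold_locales
  show "rmse (protocol N) (num_stages N * repetitions N + 1) (estimate N) \<theta> \<epsilon> \<le> 1538 * ln N / N"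
    by (rule rmse_protocol)
qed

end
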